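(* Suppose the model has a single-strain ($I_1$)-infection equilibrium $E_1=(\bar S,\bar V_1,\bar I_1,0)$ and a single-strain ($I_2$)-infection equilibrium $E_2=(\tilde S,\tilde V_1,0,\tilde I_2)$, each with positive listed components. Define $\bar{\mathcal{R}}_2=\frac{1}{\alpha_2}\frac{\partial F_2}{\partial I_2}(\bar S,0)+\frac{k\bar V_1}{\alpha_2}$ and $\tilde{\mathcal{R}}_1=\frac{1}{\alpha_1}\frac{\partial F_1}{\partial I_1}(\tilde S,0)$. If $\bar{\mathcal{R}}_2>1$ and $\tilde{\mathcal{R}}_1>1$, then the model admits an endemic equilibrium $E_3=(S^*,V_1^*,I_1^*,I_2^* )$ with all components positive.
   Context: The model is $\dot S=\Lambda-F_1(S,I_1)-F_2(S,I_2)-\lambda S$, $\dot V_1=rS-(\mu+kI_2)V_1$, $\dot I_1=F_1(S,I_1)-\alpha_1I_1$, $\dot I_2=F_2(S,I_2)+kI_2V_1-\alpha_2I_2$ on $\mathbb{R}^4_+$. The constants $\Lambda,\mu,r,k,\gamma_1,\gamma_2>0$ and $v_1,v_2\ge0$; $\lambda=r+\mu$ and $\alpha_i=\gamma_i+v_i+\mu$. For $i=1,2$ the incidence functions satisfy: - (H1) $F_i(S,I_i)=I_if_i(S,I_i)$ with $F_i,f_i\in C^2(\mathbb{R}^2_+,\mathbb{R}_+)$ and $F_i(0,I_i)=F_i(S,0)=0$; - (H2) $\partial f_i/\partial S>0$ and $\partial f_i/\partial I_i\le0$; - (H3) $\lim_{I_i\to0^+}F_i(S,I_i)/I_i$ exists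 and is positive for $S>0$. *)

theory Defs
  imports "HOL-Analysis.Analysis"
begin

definition quadrant :: "(real \<times> real) set" where
  "quadrant = {p. fst p \<ge> 0 \<and> snd p \<ge> 0}"

definition C2_on :: "(real \<times> real \<Rightarrow> real) \<Rightarrow> (real \<times> real) set \<Rightarrow> bool" where
  "C2_on g Q \<longleftrightarrow>
     (\<exists>(Dg :: real \<times> real \<Rightarrow> ((real \<times> real) \<Rightarrow>\<^sub>L real))
        (D2g :: real \<times> real \<Rightarrow> ((real \<times> real) \<Rightarrow>\<^sub>L ((real \<times> real) \<Rightarrow>\<^sub>L real))).
        (\<forall>x\<in>Q. (g has_derivative blinfun_apply (Dg x)) (at x within Q)) \<and>
        (\<forall>x\<in>Q. (Dg has_derivative blinfun_apply (D2g x)) (at x within Q)) \<and>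
        continuous_on Q D2g)"

definition incidence_ok :: "(real \<Rightarrow> real \<Rightarrow> real) \<Rightarrow> (real \<Rightarrow> real \<Rightarrow> real) \<Rightarrow> bool" where
  "incidence_ok F f \<longleftrightarrow>
     \<comment> \<open>(H1)\<close>
     (\<forall>S\<ge>0. \<forall>I\<ge>0. F S I = I * f S I \<and> F S I \<ge> 0 \<and> f S I \<ge> 0) \<and>
     C2_on (\<lambda>p. F (fst p) (snd p)) quadrant \<and>
     C2_on (\<lambda>p. f (fst p) (snd p)) quadrant \<and>
     (\<forall>I\<ge>0. F 0 I = 0) \<and> (\<forall>S\<ge>0. F S 0 = 0) \<and>
     \<comment> \<open>(H2)\<close>
     (\<forall>S\<ge>0. \<forall>I\<ge>0. \<exists>d. ((\<lambda>s. f s I) has_real_derivative d) (at S within {0..}) \<and> d > 0) \<and>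
     (\<forall>S\<ge>0. \<forall>I\<ge>0. \<exists>d. ((\<lambda>i. f S i) has_real_derivative d) (at I within {0..}) \<and> d \<le> 0) \<and>
     \<comment> \<open>(H3)\<close>
     (\<forall>S>0. \<exists>L>0. ((\<lambda>I. F S I / I) \<longlongrightarrow> L) (at_right 0))"

text \<open>Partial derivative dF/dI at (S,0), taken from the right (domain is R^2_+).
  Since F(S,0) = 0 this is the limit of F(S,I)/I as I tends to 0+.\<close>
definition dF_dI0 :: "(real \<Rightarrow> real \<Rightarrow> real) \<Rightarrow> real \<Rightarrow> real" where
  "dF_dI0 F S = Lim (at_right 0) (\<lambda>I. (F S I - F S 0) / I)"

definition is_equilibrium ::
  "real \<Rightarrow> real \<Rightarrow> real \<Rightarrow> real \<Rightarrow> real \<Rightarrow> real \<Rightarrow>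
   (real \<Rightarrow> real \<Rightarrow> real) \<Rightarrow> (real \<Rightarrow> real \<Rightarrow> real) \<Rightarrow>
   real \<Rightarrow> real \<Rightarrow> real \<Rightarrow> real \<Rightarrow> bool" where
  "is_equilibrium \<Lambda> \<mu> r k \<alpha>1 \<alpha>2 F1 F2 S V1 I1 I2 \<longleftrightarrow>
     \<Lambda> - F1 S I1 - F2 S I2 - (r + \<mu>) * S = 0 \<and>
     r * S - (\<mu> + k * I2) * V1 = 0 \<and>
     F1 S I1 - \<alpha>1 * I1 = 0 \<and>
     F2 S I2 + k * I2 * V1 - \<alpha>2 * I2 = 0"

end

theory Submission
  imports Defs
begin

text \<open>
  At an equilibrium with \<open>I\<^sub>2 > 0\<close> the \<open>V\<^sub>1\<close>- and \<open>I\<^sub>2\<close>-equations say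
  \<open>V\<^sub>1 = r S / (\<mu> + k I\<^sub>2)\<close> and \<open>f\<^sub>2(S, I\<^sub>2) + k V\<^sub>1 = \<alpha>\<^sub>2\<close>. The left side of the latter
  increases in \<open>S\<close> and decreases in \<open>I\<^sub>2\<close>, so it defines a continuous increasing curve
  \<open>S = \<sigma>(I\<^sub>2)\<close>. Summing all four equations gives \<open>\<Lambda> = \<mu> S + \<mu> V\<^sub>1 + \<alpha>\<^sub>1 I\<^sub>1 + \<alpha>\<^sub>2 I\<^sub>2\<close>,
  which determines \<open>I\<^sub>1 = \<iota>(I\<^sub>2)\<close>, a decreasing function. At \<open>I\<^sub>2 = 0\<close> the hypothesis on
  \<open>E\<^sub>1\<close> puts \<open>\<sigma>(0)\<close> below and \<open>\<iota>(0)\<close> above the corresponding components of \<open>E\<^sub>1\<close>,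
  so \<open>f\<^sub>1(\<sigma>, \<iota>) < \<alpha>\<^sub>1\<close> there; the curve ends at \<open>E\<^sub>2\<close>, where \<open>\<iota> = 0\<close> and the hypothesis
  on \<open>E\<^sub>2\<close> gives \<open>f\<^sub>1 > \<alpha>\<^sub>1\<close>. The intermediate value theorem yields a point in between
  with \<open>f\<^sub>1(\<sigma>, \<iota>) = \<alpha>\<^sub>1\<close>, which is an endemic equilibrium.
\<close>

lemma continuous_on_atLeast_0_if_deriv_within:
  fixes g :: "real \<Rightarrow> real"
  assumes deriv: "\<And>x. 0 \<le> x \<Longrightarrow> \<exists>d. (g has_real_derivative d) (at x within {0..})"
  shows "continuous_on {0..} g"
  unfolding continuous_on_eq_continuous_within
proof
  fix x :: real
  assume "x \<in> {0..}"
  then obtain d where "(g has_real_derivative d) (at x within {0..})"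
    using deriv by auto
  then show "continuous (at x within {0..}) g"
    by (rule DERIV_continuous)
qed

lemma has_real_derivative_at_if_within_atLeast_0:
  assumes "(g has_real_derivative d) (at x within {0..})" "0 < x"
  shows "(g has_real_derivative d) (at x)"
proof -
  have "x \<in> interior {0..}"
    using \<open>0 < x\<close> interior_Ici[of "-1" "0::real"] by simp
  then show ?thesis
    using assms(1) at_within_interior by metis
qed

lemma strict_mono_if_pos_deriv_within_atLeast_0:
  fixes g :: "real \<Rightarrow> real"
  assumes deriv: "\<And>x. 0 \<le> x \<Longrightarrow> \<exists>d>0. (g has_real_derivative d) (at x within {0..})"
    and "0 \<le> a" "a < b"
  shows "g a < g b"
proof (rule DERIV_pos_imp_increasing_open[OF \<open>a < b\<close>])
  fix x
  assume "a < x" "x < b"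
  then obtain d where "0 < d" "(g has_real_derivative d) (at x within {0..})"
    using deriv[of x] \<open>0 \<le> a\<close> by auto
  moreover have "0 < x"
    using \<open>0 \<le> a\<close> \<open>a < x\<close> by simp
  ultimately show "\<exists>d. (g has_real_derivative d) (at x) \<and> 0 < d"
    using has_real_derivative_at_if_within_atLeast_0 by blast
next
  have "continuous_on {0..} g"
    using deriv by (intro continuous_on_atLeast_0_if_deriv_within) blast
  then show "continuous_on {a..b} g"
    by (rule continuous_on_subset) (use \<open>0 \<le> a\<close> in auto)
qed

lemma antimono_if_nonpos_deriv_within_atLeast_0:
  fixes g :: "real \<Rightarrow> real"
  assumes deriv: "\<And>x. 0 \<le> x \<Longrightarrow> \<exists>d\<le>0. (g has_real_derivative d) (at x within {0..})"
    and "0 \<le> a" "a \<le> b"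
  shows "g b \<le> g a"
proof (rule DERIV_nonpos_imp_decreasing_open[OF \<open>a \<le> b\<close>])
  fix x
  assume "a < x" "x < b"
  then obtain d where "d \<le> 0" "(g has_real_derivative d) (at x within {0..})"
    using deriv[of x] \<open>0 \<le> a\<close> by auto
  moreover have "0 < x"
    using \<open>0 \<le> a\<close> \<open>a < x\<close> by simp
  ultimately show "\<exists>d. (g has_real_derivative d) (at x) \<and> d \<le> 0"
    using has_real_derivative_at_if_within_atLeast_0 by blast
next
  have "continuous_on {0..} g"
    using deriv by (intro continuous_on_atLeast_0_if_deriv_within) blast
  then show "continuous_on {a..b} g"
    by (rule continuous_on_subset) (use \<open>0 \<le> a\<close> in auto)
qed

lemma incidence_ok_factor:
  assumes "incidence_ok F f" "0 \<le> S" "0 \<le> I"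
  shows "F S I = I * f S I"
proof -
  have "\<forall>S\<ge>0. \<forall>I\<ge>0. F S I = I * f S I \<and> F S I \<ge> 0 \<and> f S I \<ge> 0"
    using assms(1) unfolding incidence_ok_def by (elim conjE)
  then show ?thesis
    using assms(2,3) by blast
qed

lemma incidence_ok_nonneg:
  assumes "incidence_ok F f" "0 \<le> S" "0 \<le> I"
  shows "0 \<le> f S I"
proof -
  have "\<forall>S\<ge>0. \<forall>I\<ge>0. F S I = I * f S I \<and> F S I \<ge> 0 \<and> f S I \<ge> 0"
    using assms(1) unfolding incidence_ok_def by (elim conjE)
  then show ?thesis
    using assms(2,3) by blast
qed

lemma incidence_ok_deriv_S:
  assumes "incidence_ok F f" "0 \<le> I"
  shows "\<And>S. 0 \<le> S \<Longrightarrow> \<exists>d>0. ((\<lambda>S. f S I) has_real_derivative d) (at S within {0..})"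
proof -
  have "\<forall>S\<ge>0. \<forall>I\<ge>0. \<exists>d. ((\<lambda>s. f s I) has_real_derivative d) (at S within {0..}) \<and> d > 0"
    using assms(1) unfolding incidence_ok_def by (elim conjE)
  then show "\<And>S. 0 \<le> S \<Longrightarrow> \<exists>d>0. ((\<lambda>S. f S I) has_real_derivative d) (at S within {0..})"
    using assms(2) by blast
qed

lemma incidence_ok_deriv_I:
  assumes "incidence_ok F f" "0 \<le> S"
  shows "\<And>I. 0 \<le> I \<Longrightarrow> \<exists>d\<le>0. (f S has_real_derivative d) (at I within {0..})"
proof -
  have "\<forall>S\<ge>0. \<forall>I\<ge>0. \<exists>d. ((\<lambda>i. f S i) has_real_derivative d) (at I within {0..}) \<and> d \<le> 0"
    using assms(1) unfolding incidence_ok_def by (elim conjE)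
  then show "\<And>I. 0 \<le> I \<Longrightarrow> \<exists>d\<le>0. (f S has_real_derivative d) (at I within {0..})"
    using assms(2) by blast
qed

lemma incidence_ok_strict_mono_S:
  assumes "incidence_ok F f" "0 \<le> S" "S < S'" "0 \<le> I"
  shows "f S I < f S' I"
  using strict_mono_if_pos_deriv_within_atLeast_0[OF incidence_ok_deriv_S[OF assms(1,4)] assms(2,3)] .

lemma incidence_ok_antimono_I:
  assumes "incidence_ok F f" "0 \<le> I" "I \<le> I'" "0 \<le> S"
  shows "f S I' \<le> f S I"
  using antimono_if_nonpos_deriv_within_atLeast_0[OF incidence_ok_deriv_I[OF assms(1,4)] assms(2,3)] .

lemma incidence_ok_continuous_on_S:
  assumes "incidence_ok F f" "0 \<le> I"
  shows "continuous_on {0..} (\<lambda>S. f S I)"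
  using incidence_ok_deriv_S[OF assms]
  by (intro continuous_on_atLeast_0_if_deriv_within) blast

lemma incidence_ok_continuous_on_I:
  assumes "incidence_ok F f" "0 \<le> S"
  shows "continuous_on {0..} (f S)"
  using incidence_ok_deriv_I[OF assms]
  by (intro continuous_on_atLeast_0_if_deriv_within) blast

lemma incidence_ok_continuous_on_quadrant:
  assumes "incidence_ok F f"
  shows "continuous_on quadrant (\<lambda>p. f (fst p) (snd p))"
proof -
  have "C2_on (\<lambda>p. f (fst p) (snd p)) quadrant"
    using assms unfolding incidence_ok_def by (elim conjE)
  then show ?thesis
    unfolding C2_on_def by (elim exE conjE) (rule has_derivative_continuous_on, blast)
qed

lemma incidence_ok_tendsto_I_0:
  assumes "incidence_ok F f" "0 \<le> S"
  shows "(f S \<longlongrightarrow> f S 0) (at_right 0)"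
proof -
  have "(f S \<longlongrightarrow> f S 0) (at 0 within {0..})"
    using incidence_ok_continuous_on_I[OF assms] by (simp add: continuous_on_def)
  then show ?thesis
    by (rule tendsto_within_subset) auto
qed

lemma incidence_ok_zero_S:
  assumes inc: "incidence_ok F f" and "0 \<le> I"
  shows "f 0 I = 0"
proof -
  have "\<forall>I\<ge>0. F 0 I = 0"
    using inc unfolding incidence_ok_def by (elim conjE)
  then have pos: "f 0 i = 0" if "0 < i" for i
    using incidence_ok_factor[OF inc, of 0 i] that by simp
  have "(f 0 \<longlongrightarrow> 0) (at_right 0)"
    by (rule Lim_transform_eventually[of "\<lambda>_. 0"])
      (auto simp: eventually_at_right_field pos intro!: exI[of _ 1])
  then have "f 0 0 = 0"
    using incidence_ok_tendsto_I_0[OF inc, of 0] by (auto intro: tendsto_unique[OF trivial_limit_at_right_real])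
  then show ?thesis
    using pos \<open>0 \<le> I\<close> by (cases "I = 0") simp_all
qed

lemma incidence_ok_dF_dI0:
  assumes inc: "incidence_ok F f" and "0 \<le> S"
  shows "dF_dI0 F S = f S 0"
proof -
  have "f S I = (F S I - F S 0) / I" if "0 < I" for I
    using incidence_ok_factor[OF inc \<open>0 \<le> S\<close>, of I] incidence_ok_factor[OF inc \<open>0 \<le> S\<close>, of 0] that
    by simp
  then have "\<forall>\<^sub>F I in at_right 0. f S I = (F S I - F S 0) / I"
    by (auto simp: eventually_at_right_field intro!: exI[of _ 1])
  then have "((\<lambda>I. (F S I - F S 0) / I) \<longlongrightarrow> f S 0) (at_right 0)"
    using incidence_ok_tendsto_I_0[OF assms] by (rule Lim_transform_eventually[rotated])
  then show ?thesis
    unfolding dF_dI0_def by (rule tendsto_Lim[rotated]) simp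
qed

lemma continuous_on_level_root:
  fixes h :: "real \<Rightarrow> real \<Rightarrow> real" and \<sigma> :: "real \<Rightarrow> real"
  assumes mono: "\<And>S S' I. I \<in> A \<Longrightarrow> 0 \<le> S \<Longrightarrow> S < S' \<Longrightarrow> h S I < h S' I"
    and cont: "\<And>S. 0 \<le> S \<Longrightarrow> continuous_on A (h S)"
    and root: "\<And>I. I \<in> A \<Longrightarrow> 0 < \<sigma> I \<and> h (\<sigma> I) I = c"
  shows "continuous_on A \<sigma>"
  unfolding continuous_on_def
proof (intro ballI tendstoI)
  fix I0 and e :: real
  assume I0: "I0 \<in> A" and "0 < e"
  have mono_le: "h S I \<le> h S' I" if "I \<in> A" "0 \<le> S" "S \<le> S'" for S S' I
    using mono[OF that(1,2), of S'] that(3) unfolding le_less by auto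
  define d where "d = min e (\<sigma> I0) / 2"
  have d: "0 < d" "d < e" "d < \<sigma> I0"
    using \<open>0 < e\<close> root[OF I0] by (auto simp: d_def)
  have below: "h (\<sigma> I0 - d) I0 < c" and above: "c < h (\<sigma> I0 + d) I0"
    using mono[OF I0, of "\<sigma> I0 - d" "\<sigma> I0"] mono[OF I0, of "\<sigma> I0" "\<sigma> I0 + d"] root[OF I0] d
    by simp_all
  have "(h S \<longlongrightarrow> h S I0) (at I0 within A)" if "0 \<le> S" for S
    using cont[OF that] I0 by (simp add: continuous_on_def)
  then have "(h (\<sigma> I0 - d) \<longlongrightarrow> h (\<sigma> I0 - d) I0) (at I0 within A)"
      and "(h (\<sigma> I0 + d) \<longlongrightarrow> h (\<sigma> I0 + d) I0) (at I0 within A)"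
    using d by simp_all
  then have "\<forall>\<^sub>F I in at I0 within A. h (\<sigma> I0 - d) I < c"
      and "\<forall>\<^sub>F I in at I0 within A. c < h (\<sigma> I0 + d) I"
    using below above by (blast intro: order_tendstoD)+
  moreover have "\<forall>\<^sub>F I in at I0 within A. I \<in> A"
    by (simp add: eventually_at_filter)
  ultimately show "\<forall>\<^sub>F I in at I0 within A. dist (\<sigma> I) (\<sigma> I0) < e"
  proof eventually_elim
    case (elim I)
    have "\<not> \<sigma> I \<le> \<sigma> I0 - d"
      using mono_le[of I "\<sigma> I" "\<sigma> I0 - d"] root[of I] elim by force
    moreover have "\<not> \<sigma> I0 + d \<le> \<sigma> I"
      using mono_le[of I "\<sigma> I0 + d" "\<sigma> I"] root[of I] root[OF I0] d elim by force
    ultimately show ?case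
      using d by (simp add: dist_real_def abs_less_iff)
  qed
qed

locale two_strain_vaccination_model =
  fixes \<Lambda> \<mu> r k \<alpha>1 \<alpha>2 :: real and F1 f1 F2 f2 :: "real \<Rightarrow> real \<Rightarrow> real"
  assumes \<mu>_pos: "0 < \<mu>" and r_pos: "0 < r" and k_pos: "0 < k"
    and \<alpha>1_pos: "0 < \<alpha>1" and \<alpha>2_pos: "0 < \<alpha>2"
    and incidence1: "incidence_ok F1 f1" and incidence2: "incidence_ok F2 f2"
begin

definition V1_of :: "real \<Rightarrow> real \<Rightarrow> real" where
  "V1_of S I2 = r * S / (\<mu> + k * I2)"

definition strain2_gain :: "real \<Rightarrow> real \<Rightarrow> real" where
  "strain2_gain S I2 = f2 S I2 + k * V1_of S I2"

definition S_curve :: "real \<Rightarrow> real" where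
  "S_curve I2 = (SOME S. 0 < S \<and> strain2_gain S I2 = \<alpha>2)"

definition I1_curve :: "real \<Rightarrow> real" where
  "I1_curve I2 = (\<Lambda> - \<mu> * S_curve I2 - \<mu> * V1_of (S_curve I2) I2 - \<alpha>2 * I2) / \<alpha>1"

lemma V1_of_denominator_pos: "0 \<le> I2 \<Longrightarrow> 0 < \<mu> + k * I2"
  using \<mu>_pos k_pos by (simp add: add_pos_nonneg)

lemma V1_of_mono: "0 \<le> I2 \<Longrightarrow> S \<le> S' \<Longrightarrow> V1_of S I2 \<le> V1_of S' I2"
  unfolding V1_of_def using V1_of_denominator_pos r_pos
  by (intro divide_right_mono mult_left_mono) (auto simp: less_imp_le)

lemma V1_of_strict_anti:
  assumes "0 < S" "0 \<le> I2" "I2 < I2'"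
  shows "V1_of S I2' < V1_of S I2"
  unfolding V1_of_def using assms r_pos k_pos V1_of_denominator_pos[of I2] V1_of_denominator_pos[of I2']
  by (intro divide_strict_left_mono mult_pos_pos) auto

lemma V1_of_pos: "0 < S \<Longrightarrow> 0 \<le> I2 \<Longrightarrow> 0 < V1_of S I2"
  using V1_of_denominator_pos r_pos by (simp add: V1_of_def)

lemma strain2_gain_strict_mono:
  assumes "0 \<le> S" "S < S'" "0 \<le> I2"
  shows "strain2_gain S I2 < strain2_gain S' I2"
proof -
  have "V1_of S I2 \<le> V1_of S' I2"
    using V1_of_mono assms by simp
  then have "k * V1_of S I2 \<le> k * V1_of S' I2"
    using k_pos by (simp add: mult_left_mono)
  then show ?thesis
    using incidence_ok_strict_mono_S[OF incidence2 assms] by (simp add: strain2_gain_def)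
qed

lemma strain2_gain_mono:
  assumes "0 \<le> S" "S \<le> S'" "0 \<le> I2"
  shows "strain2_gain S I2 \<le> strain2_gain S' I2"
  using strain2_gain_strict_mono[of S S' I2] assms unfolding le_less by auto

lemma strain2_gain_strict_anti:
  assumes "0 < S" "0 \<le> I2" "I2 < I2'"
  shows "strain2_gain S I2' < strain2_gain S I2"
proof -
  have "V1_of S I2' < V1_of S I2"
    using V1_of_strict_anti assms by simp
  then show ?thesis
    using incidence_ok_antimono_I[OF incidence2, of I2 I2' S] assms k_pos
    by (simp add: strain2_gain_def add_le_less_mono)
qed

lemma strain2_gain_continuous_on_S:
  "0 \<le> I2 \<Longrightarrow> continuous_on {0..} (\<lambda>S. strain2_gain S I2)"
  unfolding strain2_gain_def V1_of_def
  by (intro continuous_intros incidence_ok_continuous_on_S[OF incidence2])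
    (auto dest: V1_of_denominator_pos)

lemma strain2_gain_continuous_on_I2:
  "0 \<le> S \<Longrightarrow> continuous_on {0..} (strain2_gain S)"
  unfolding strain2_gain_def V1_of_def
  by (intro continuous_intros incidence_ok_continuous_on_I[OF incidence2])
    (auto dest: V1_of_denominator_pos)

lemma strain2_gain_root_exists:
  assumes "0 \<le> I2"
  shows "\<exists>S>0. strain2_gain S I2 = \<alpha>2"
proof -
  define M where "M = \<alpha>2 * (\<mu> + k * I2) / (k * r)"
  have "0 < M"
    using \<alpha>2_pos k_pos r_pos V1_of_denominator_pos[OF assms] by (simp add: M_def)
  have "k * V1_of M I2 = \<alpha>2"
    using k_pos r_pos V1_of_denominator_pos[OF assms] by (simp add: M_def V1_of_def)
  then have "\<alpha>2 \<le> strain2_gain M I2"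
    using incidence_ok_nonneg[OF incidence2, of M I2] \<open>0 < M\<close> assms
    by (simp add: strain2_gain_def)
  moreover have zero: "strain2_gain 0 I2 = 0"
    using incidence_ok_zero_S[OF incidence2 assms] by (simp add: strain2_gain_def V1_of_def)
  moreover have "continuous_on {0..M} (\<lambda>S. strain2_gain S I2)"
    using strain2_gain_continuous_on_S[OF assms] by (rule continuous_on_subset) auto
  ultimately obtain S where "0 \<le> S" "strain2_gain S I2 = \<alpha>2"
    using IVT'[of "\<lambda>S. strain2_gain S I2" 0 \<alpha>2 M] \<alpha>2_pos \<open>0 < M\<close> by auto
  moreover have "S \<noteq> 0"
    using zero \<open>strain2_gain S I2 = \<alpha>2\<close> \<alpha>2_pos by auto
  ultimately show ?thesis
    by (metis less_le)
qed

lemma S_curve_pos: "0 \<le> I2 \<Longrightarrow> 0 < S_curve I2"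
  and strain2_gain_S_curve: "0 \<le> I2 \<Longrightarrow> strain2_gain (S_curve I2) I2 = \<alpha>2"
  using someI_ex[OF strain2_gain_root_exists] by (auto simp: S_curve_def)

lemma S_curve_less:
  assumes "0 \<le> I2" "0 \<le> S" "\<alpha>2 < strain2_gain S I2"
  shows "S_curve I2 < S"
proof (rule ccontr)
  assume "\<not> S_curve I2 < S"
  then have "strain2_gain S I2 \<le> strain2_gain (S_curve I2) I2"
    using strain2_gain_mono assms by simp
  then show False
    using strain2_gain_S_curve assms by simp
qed

lemma S_curve_greater:
  assumes "0 \<le> I2" "0 \<le> S" "strain2_gain S I2 < \<alpha>2"
  shows "S < S_curve I2"
proof (rule ccontr)
  assume "\<not> S < S_curve I2"
  then have "strain2_gain (S_curve I2) I2 \<le> strain2_gain S I2"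
    using strain2_gain_mono S_curve_pos assms by (simp add: less_imp_le)
  then show False
    using strain2_gain_S_curve assms by simp
qed

lemma S_curve_eqI:
  assumes "0 \<le> I2" "0 \<le> S" "strain2_gain S I2 = \<alpha>2"
  shows "S_curve I2 = S"
  using assms strain2_gain_strict_mono[of S "S_curve I2" I2] strain2_gain_strict_mono[of "S_curve I2" S I2]
    S_curve_pos strain2_gain_S_curve
  by (cases "S_curve I2" S rule: linorder_cases) (simp_all add: less_imp_le)

lemma S_curve_strict_mono:
  assumes "0 \<le> I2" "I2 < I2'"
  shows "S_curve I2 < S_curve I2'"
proof (rule S_curve_greater)
  show "strain2_gain (S_curve I2) I2' < \<alpha>2"
    using strain2_gain_strict_anti[of "S_curve I2" I2 I2'] S_curve_pos strain2_gain_S_curve assms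
    by simp
qed (use assms S_curve_pos in \<open>simp_all add: less_imp_le\<close>)

lemma S_curve_continuous_on: "continuous_on {0..} S_curve"
  by (rule continuous_on_level_root[where h = strain2_gain and c = \<alpha>2])
    (simp_all add: strain2_gain_strict_mono strain2_gain_continuous_on_I2 S_curve_pos strain2_gain_S_curve)

lemma I1_curve_eq:
  "\<alpha>1 * I1_curve I2 = \<Lambda> - \<mu> * S_curve I2 - \<mu> * V1_of (S_curve I2) I2 - \<alpha>2 * I2"
  using \<alpha>1_pos by (simp add: I1_curve_def)

lemma I1_curve_continuous_on: "continuous_on {0..} I1_curve"
  unfolding I1_curve_def V1_of_def
  using \<alpha>1_pos by (intro continuous_intros S_curve_continuous_on) (auto dest: V1_of_denominator_pos)

lemma I1_curve_strict_anti:
  assumes "0 \<le> I2" "I2 < I2'"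
  shows "I1_curve I2' < I1_curve I2"
proof -
  define s s' where "s = S_curve I2" and "s' = S_curve I2'"
  define v w v' where "v = V1_of s I2" and "w = V1_of s' I2" and "v' = V1_of s' I2'"
  have "s < s'" "0 < s"
    using S_curve_strict_mono S_curve_pos assms by (auto simp: s_def s'_def)
  have "\<mu> * v \<le> \<mu> * w"
    using V1_of_mono[of I2 s s'] \<open>s < s'\<close> assms \<mu>_pos by (simp add: v_def w_def)
  have "v' \<le> w"
    using V1_of_strict_anti[of s' I2 I2'] \<open>0 < s\<close> \<open>s < s'\<close> assms by (simp add: v'_def w_def)
  then have "k * I2 * v' \<le> k * I2 * w"
    using assms k_pos by (simp add: mult_left_mono)
  have "(\<mu> + k * I2) * w = (\<mu> + k * I2') * v'"
    using V1_of_denominator_pos[of I2] V1_of_denominator_pos[of I2'] assms by (simp add: w_def v'_def V1_of_def)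
  have "k * v' \<le> \<alpha>2"
    using strain2_gain_S_curve[of I2'] incidence_ok_nonneg[OF incidence2, of s' I2']
      \<open>0 < s\<close> \<open>s < s'\<close> assms
    by (simp add: strain2_gain_def s'_def v'_def)
  then have "k * v' * (I2' - I2) \<le> \<alpha>2 * (I2' - I2)"
    using assms by (simp add: mult_right_mono)
  have "\<mu> * s + \<mu> * v + \<alpha>2 * I2 < \<mu> * s' + \<mu> * v' + \<alpha>2 * I2'"
  proof -
    \<comment> \<open>a drop of \<open>\<mu> V\<^sub>1\<close> is paid for by the rise of \<open>\<alpha>\<^sub>2 I\<^sub>2\<close>, because \<open>k V\<^sub>1 \<le> \<alpha>\<^sub>2\<close> on the curve\<close>
    have "\<mu> * v \<le> \<mu> * v' + k * v' * (I2' - I2)"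
      using \<open>\<mu> * v \<le> \<mu> * w\<close> \<open>k * I2 * v' \<le> k * I2 * w\<close>
        \<open>(\<mu> + k * I2) * w = (\<mu> + k * I2') * v'\<close>
      by (simp add: algebra_simps)
    moreover have "\<mu> * s < \<mu> * s'"
      using \<open>s < s'\<close> \<mu>_pos by simp
    ultimately show ?thesis
      using \<open>k * v' * (I2' - I2) \<le> \<alpha>2 * (I2' - I2)\<close> by (simp add: algebra_simps)
  qed
  then show ?thesis
    using \<alpha>1_pos by (simp add: I1_curve_def s_def s'_def v_def v'_def divide_strict_right_mono)
qed

lemma equilibrium_on_curve:
  assumes "0 < I2" "0 \<le> I1_curve I2" "f1 (S_curve I2) (I1_curve I2) = \<alpha>1"
  shows "is_equilibrium \<Lambda> \<mu> r k \<alpha>1 \<alpha>2 F1 F2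
           (S_curve I2) (V1_of (S_curve I2) I2) (I1_curve I2) I2"
proof -
  define S V I1 where "S = S_curve I2" and "V = V1_of S I2" and "I1 = I1_curve I2"
  have "0 < S"
    using S_curve_pos assms by (simp add: S_def)
  have F1: "F1 S I1 = \<alpha>1 * I1"
    using incidence_ok_factor[OF incidence1, of S I1] \<open>0 < S\<close> assms by (simp add: S_def I1_def)
  have "f2 S I2 = \<alpha>2 - k * V"
    using strain2_gain_S_curve[of I2] assms by (simp add: strain2_gain_def S_def V_def)
  then have F2: "F2 S I2 = I2 * (\<alpha>2 - k * V)"
    using incidence_ok_factor[OF incidence2, of S I2] \<open>0 < S\<close> assms by simp
  have V: "(\<mu> + k * I2) * V = r * S"
    using V1_of_denominator_pos[of I2] assms by (simp add: V_def V1_of_def)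
  have I1: "\<alpha>1 * I1 = \<Lambda> - \<mu> * S - \<mu> * V - \<alpha>2 * I2"
    using I1_curve_eq by (simp add: I1_def S_def V_def)
  show ?thesis
    unfolding is_equilibrium_def S_def[symmetric] V_def[symmetric] I1_def[symmetric] F1 F2
    using V I1 by (simp add: algebra_simps)
qed

lemma f1_on_curve_at_0_less:
  assumes "0 < Sb" "0 < Ib" and E1: "is_equilibrium \<Lambda> \<mu> r k \<alpha>1 \<alpha>2 F1 F2 Sb Vb Ib 0"
    and "\<alpha>2 < f2 Sb 0 + k * Vb"
  shows "f1 (S_curve 0) (I1_curve 0) < \<alpha>1"
proof -
  have F1: "F1 Sb Ib = Ib * f1 Sb Ib" and F2: "F2 Sb 0 = 0"
    using incidence_ok_factor[OF incidence1, of Sb Ib] incidence_ok_factor[OF incidence2, of Sb 0] assms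
    by simp_all
  have "f1 Sb Ib = \<alpha>1"
    using E1 F1 \<open>0 < Ib\<close> by (simp add: is_equilibrium_def)
  have "Vb = V1_of Sb 0"
    using E1 \<mu>_pos by (simp add: is_equilibrium_def V1_of_def field_simps)
  then have "S_curve 0 < Sb"
    using S_curve_less[of 0 Sb] assms by (simp add: strain2_gain_def)
  have "\<Lambda> = r * Sb + \<mu> * Sb + \<alpha>1 * Ib"
    using E1 F2 \<open>f1 Sb Ib = \<alpha>1\<close> F1 unfolding is_equilibrium_def by algebra
  moreover have "\<mu> * V1_of (S_curve 0) 0 = r * S_curve 0"
    using \<mu>_pos by (simp add: V1_of_def)
  moreover have "r * S_curve 0 + \<mu> * S_curve 0 < r * Sb + \<mu> * Sb"
    using \<open>S_curve 0 < Sb\<close> r_pos \<mu>_pos by (simp add: add_strict_mono)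
  ultimately have "\<alpha>1 * Ib < \<alpha>1 * I1_curve 0"
    using I1_curve_eq[of 0] by simp
  then have "Ib < I1_curve 0"
    using \<alpha>1_pos by simp
  have "f1 (S_curve 0) (I1_curve 0) \<le> f1 (S_curve 0) Ib"
    using incidence_ok_antimono_I[OF incidence1] \<open>Ib < I1_curve 0\<close> \<open>0 < Ib\<close> S_curve_pos[of 0] by simp
  also have "\<dots> < f1 Sb Ib"
    using incidence_ok_strict_mono_S[OF incidence1] \<open>S_curve 0 < Sb\<close> \<open>0 < Ib\<close> S_curve_pos[of 0] by simp
  finally show ?thesis
    using \<open>f1 Sb Ib = \<alpha>1\<close> by simp
qed

lemma curve_through_E2:
  assumes "0 < St" "0 < It" and E2: "is_equilibrium \<Lambda> \<mu> r k \<alpha>1 \<alpha>2 F1 F2 St Vt 0 It"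
  shows "S_curve It = St" and "I1_curve It = 0"
proof -
  have F1: "F1 St 0 = 0" and F2: "F2 St It = It * f2 St It"
    using incidence_ok_factor[OF incidence1, of St 0] incidence_ok_factor[OF incidence2, of St It] assms
    by simp_all
  have "It * (f2 St It + k * Vt - \<alpha>2) = 0"
    using E2 F2 by (simp add: is_equilibrium_def algebra_simps)
  then have gain: "f2 St It + k * Vt = \<alpha>2"
    using \<open>0 < It\<close> by simp
  have "Vt = V1_of St It"
    using E2 V1_of_denominator_pos[of It] \<open>0 < It\<close> by (simp add: is_equilibrium_def V1_of_def field_simps)
  then show "S_curve It = St"
    using S_curve_eqI[of It St] gain assms by (simp add: strain2_gain_def)
  moreover have "\<Lambda> - \<mu> * St - \<mu> * Vt - \<alpha>2 * It = 0"
    using E2 F1 F2 gain unfolding is_equilibrium_def by algebra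
  ultimately have "\<alpha>1 * I1_curve It = 0"
    using I1_curve_eq[of It] \<open>Vt = V1_of St It\<close> by simp
  then show "I1_curve It = 0"
    using \<alpha>1_pos by simp
qed

theorem endemic_equilibrium_exists:
  assumes "0 < Sb" "0 < Ib" "is_equilibrium \<Lambda> \<mu> r k \<alpha>1 \<alpha>2 F1 F2 Sb Vb Ib 0"
    and "0 < St" "0 < It" "is_equilibrium \<Lambda> \<mu> r k \<alpha>1 \<alpha>2 F1 F2 St Vt 0 It"
    and "\<alpha>2 < f2 Sb 0 + k * Vb" and "\<alpha>1 < f1 St 0"
  shows "\<exists>S V1 I1 I2. 0 < S \<and> 0 < V1 \<and> 0 < I1 \<and> 0 < I2 \<and>
           is_equilibrium \<Lambda> \<mu> r k \<alpha>1 \<alpha>2 F1 F2 S V1 I1 I2"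
proof -
  let ?\<Phi> = "\<lambda>I2. f1 (S_curve I2) (I1_curve I2)"
  have start: "?\<Phi> 0 < \<alpha>1"
    using f1_on_curve_at_0_less assms by blast
  have finish: "\<alpha>1 < ?\<Phi> It"
    using curve_through_E2 assms by simp
  have I1_pos: "0 < I1_curve I2" if "I2 < It" "0 \<le> I2" for I2
    using I1_curve_strict_anti[of I2 It] curve_through_E2(2) assms that by simp
  have I1_nonneg: "0 \<le> I1_curve I2" if "0 \<le> I2" "I2 \<le> It" for I2
    using I1_pos[of I2] curve_through_E2(2) assms that by (cases "I2 = It") simp_all
  have curve_in_quadrant: "(\<lambda>I2. (S_curve I2, I1_curve I2)) ` {0..It} \<subseteq> quadrant"
    using S_curve_pos I1_nonneg by (auto simp: quadrant_def less_imp_le)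
  have curve_continuous: "continuous_on {0..It} (\<lambda>I2. (S_curve I2, I1_curve I2))"
    using S_curve_continuous_on I1_curve_continuous_on
    by (intro continuous_on_Pair) (auto elim: continuous_on_subset)
  have "continuous_on {0..It} ?\<Phi>"
    using continuous_on_compose2[OF incidence_ok_continuous_on_quadrant[OF incidence1]
        curve_continuous curve_in_quadrant]
    by simp
  then obtain I2 where "0 \<le> I2" "I2 \<le> It" "?\<Phi> I2 = \<alpha>1"
    using IVT'[of ?\<Phi> 0 \<alpha>1 It] start finish \<open>0 < It\<close> by auto
  moreover have "I2 \<noteq> 0" "I2 \<noteq> It"
    using start finish \<open>?\<Phi> I2 = \<alpha>1\<close> by auto
  ultimately have "0 < I2" "0 < I1_curve I2" "?\<Phi> I2 = \<alpha>1"
    using I1_pos by auto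
  then show ?thesis
    using equilibrium_on_curve S_curve_pos V1_of_pos by (meson less_imp_le)
qed

end

theorem mainTheorem10:
  fixes \<Lambda> \<mu> r k \<gamma>1 \<gamma>2 v1 v2 :: real
    and F1 F2 f1 f2 :: "real \<Rightarrow> real \<Rightarrow> real"
    and Sb Vb Ib St Vt It :: real
  assumes params: "\<Lambda> > 0" "\<mu> > 0" "r > 0" "k > 0" "\<gamma>1 > 0" "\<gamma>2 > 0" "v1 \<ge> 0" "v2 \<ge> 0"
    and H1: "incidence_ok F1 f1" and H2: "incidence_ok F2 f2"
    and E1: "Sb > 0" "Vb > 0" "Ib > 0"
      "is_equilibrium \<Lambda> \<mu> r k (\<gamma>1 + v1 + \<mu>) (\<gamma>2 + v2 + \<mu>) F1 F2 Sb Vb Ib 0"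
    and E2: "St > 0" "Vt > 0" "It > 0"
      "is_equilibrium \<Lambda> \<mu> r k (\<gamma>1 + v1 + \<mu>) (\<gamma>2 + v2 + \<mu>) F1 F2 St Vt 0 It"
    and R2: "dF_dI0 F2 Sb / (\<gamma>2 + v2 + \<mu>) + k * Vb / (\<gamma>2 + v2 + \<mu>) > 1"
    and R1: "dF_dI0 F1 St / (\<gamma>1 + v1 + \<mu>) > 1"
  shows "\<exists>S V1 I1 I2. S > 0 \<and> V1 > 0 \<and> I1 > 0 \<and> I2 > 0 \<and>
           is_equilibrium \<Lambda> \<mu> r k (\<gamma>1 + v1 + \<mu>) (\<gamma>2 + v2 + \<mu>) F1 F2 S V1 I1 I2"
proof -
  interpret two_strain_vaccination_model \<Lambda> \<mu> r k "\<gamma>1 + v1 + \<mu>" "\<gamma>2 + v2 + \<mu>" F1 f1 F2 f2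
    using params H1 H2 by unfold_locales auto
  have "\<gamma>2 + v2 + \<mu> < f2 Sb 0 + k * Vb"
    using R2 incidence_ok_dF_dI0[OF H2, of Sb] E1(1) params
    by (simp add: add_divide_distrib[symmetric] less_divide_eq_1_pos)
  moreover have "\<gamma>1 + v1 + \<mu> < f1 St 0"
    using R1 incidence_ok_dF_dI0[OF H1, of St] E2(1) params
    by (simp add: less_divide_eq_1_pos)
  ultimately show ?thesis
    using endemic_equilibrium_exists E1(1,3,4) E2(1,3,4) by blast
qed

end
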